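(* Let $(S,V)$ be a complete semiring-semimodule pair, let $S'\subseteq S$ contain $0$ and $1$, and let $\mathcal P=(n,\Gamma,I,M,P,p_0,l)$ be an $S'$-$\omega$-pushdown automaton over $(S,V)$. Then $\big(\|\mathcal P\|,\ (((M^* )_{p,\epsilon})_{p\in\Gamma},((M^{\omega,l})_p)_{p\in\Gamma})\big)$ is a solution of the $S'^{n\times n}$-algebraic system $$y_0=I\,y_{p_0}\,P,\qquad y_p=\sum_{\pi\in\Gamma^*}M_{p,\pi}\,y_\pi,\quad p\in\Gamma,$$ over the complete semiring-semimodule pair $(S^{n\times n},V^n)$. Explicitly, with $x_p=(M^* )_{p,\epsilon}$ and $z_p=(M^{\omega,l})_p$: for all $p\in\Gamma$, $x_p=\sum_{\pi\in\Gamma^*}M_{p,\pi}x_\pi$ and $z_p=\sum_{\pi=p_1\dots p_k\in\Gamma^+}M_{p,\pi}\sum_{1\le j\le k}x_{p_1}\cdots x_{p_{j-1}}z_{p_j}$ (where $x_{p_1\dots p_k}=x_{p_1}\cdots x_{p_k}$, $x_\epsilon=E$), and $\|\mathcal P\|=(I x_{p_0}P,\ I z_{p_0})$.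
   Context: A complete semiring-semimodule pair $(S,V)$ (in the sense of Ésik and Kuich, "Modern Automata Theory") consists of a complete starsemiring $S$ (arbitrary sums with infinite associativity/commutativity/distributivity laws, star $s^*=\sum_{j\ge0}s^j$) and a complete $S$-semimodule $V$, with infinite products $\prod_{j\ge1}s_j\in V$ of sequences in $S$ satisfying the axioms of that framework. The quemiring $S\times V$ (and likewise $S^{n\times n}\times V^n$) has componentwise sum and product $(s,u)(s',u')=(ss',u+su')$; in the system $y_p=(x_p,z_p)$, $y_{p_1\dots p_k}=y_{p_1}\cdots y_{p_k}$, $y_\epsilon=(E,0)$, matrices act componentwise, and $I(s,u)P=(IsP,Iu)$. A pushdown transition matrix $M\in (S'^{n\times n})^{\Gamma^*\times\Gamma^*}$ ($\Gamma^*\times\Gamma^*$ matrix with $n\times n$ blocks over $S'$) satisfies (i) for each $p\in\Gamma$ only finitely many blocks $M_{p,\pi}$ are nonzero, and (ii) $M_{\pi_1,\pi_2}=M_{p,\pi}$ if $\pi_1=p\pi'$, $\pi_2=\pi\pi'$ for some $p\in\Gamma$, $\pi,\pi'\in\Gamma^*$, and $0$ otherwise. An $S'$-$\omega$-pushdown automaton $\mathcal P=(n,\Gamma,I,M,P,p_0,l)$ consists of $n\ge1$ (states $1,\dots,n$), an alphabet $\Gamma$, a pushdown transition matrix $M\in(S'^{n\times n})^{\Gamma^*\times\Gamma^*}$, $I\in S'^{1\times n}$, $P\in S'^{n\times1}$, $p_0\in\Gamma$, and $l\in\{0,\dots,n\}$. $M^*=\sum_{m\ge0}M^m$ with blocks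 $(M^* )_{\pi,\pi'}$; with $P_l=\{(j_1,j_2,\dots)\in\{1,\dots,n\}^\omega\mid j_t\le l\text{ for infinitely many }t\}$, $M^{\omega,l}\in (V^n)^{\Gamma^*}$ is given by $((M^{\omega,l})_\pi)_i=\sum_{\pi_1,\pi_2,\ldots\in\Gamma^*}\sum_{(j_1,j_2,\ldots)\in P_l}(M_{\pi,\pi_1})_{i,j_1}(M_{\pi_1,\pi_2})_{j_1,j_2}\cdots$. The behavior is $\|\mathcal P\|=I(M^* )_{p_0,\epsilon}P+I(M^{\omega,l})_{p_0}$, i.e. the element $(I(M^* )_{p_0,\epsilon}P,\ I(M^{\omega,l})_{p_0})$ of the quemiring $S\times V$. *)

theory Defs
  imports Main
begin

text \<open>Index sets of complete sums are subsets of the fixed "tag" type (nat => nat),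
  which has the cardinality of the continuum and is closed (up to bijection)
  under finite and countable products.  Sums over families indexed by other
  types are obtained by transporting the index set along an (arbitrarily
  chosen) injection into the tag type; by the partition axiom the value does
  not depend on the chosen injection.\<close>

type_synonym tag = "nat \<Rightarrow> nat"

definition gsum :: "((tag \<Rightarrow> 'a) \<Rightarrow> tag set \<Rightarrow> 'a) \<Rightarrow> ('i \<Rightarrow> 'a) \<Rightarrow> 'i set \<Rightarrow> 'a" where
  "gsum cs f I = (let e = (SOME e :: 'i \<Rightarrow> tag. inj e) in cs (\<lambda>t. f (inv e t)) (e ` I))"

definition complete_monoid :: "((tag \<Rightarrow> 'a::comm_monoid_add) \<Rightarrow> tag set \<Rightarrow> 'a) \<Rightarrow> bool" where
  "complete_monoid cs \<longleftrightarrow>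
     (\<forall>f g I. (\<forall>t\<in>I. f t = g t) \<longrightarrow> cs f I = cs g I) \<and>
     (\<forall>f. cs f {} = 0) \<and>
     (\<forall>f t. cs f {t} = f t) \<and>
     (\<forall>f t u. t \<noteq> u \<longrightarrow> cs f {t, u} = f t + f u) \<and>
     (\<forall>f I J (B :: tag \<Rightarrow> tag set).
        I = (\<Union>j\<in>J. B j) \<and> (\<forall>j\<in>J. \<forall>j'\<in>J. j \<noteq> j' \<longrightarrow> B j \<inter> B j' = {}) \<longrightarrow>
        cs f I = cs (\<lambda>j. cs f (B j)) J)"

definition complete_semiring :: "((tag \<Rightarrow> 's::semiring_1) \<Rightarrow> tag set \<Rightarrow> 's) \<Rightarrow> bool" where
  "complete_semiring csS \<longleftrightarrow> complete_monoid csS \<and>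
     (\<forall>f g I1 I2. csS f I1 * csS g I2 = gsum csS (\<lambda>(i, j). f i * g j) (I1 \<times> I2))"

definition complete_semimodule ::
  "((tag \<Rightarrow> 's::semiring_1) \<Rightarrow> tag set \<Rightarrow> 's) \<Rightarrow> ((tag \<Rightarrow> 'v::comm_monoid_add) \<Rightarrow> tag set \<Rightarrow> 'v)
     \<Rightarrow> ('s \<Rightarrow> 'v \<Rightarrow> 'v) \<Rightarrow> bool" where
  "complete_semimodule csS csV sm \<longleftrightarrow> complete_monoid csV \<and>
     (\<forall>s s' v. sm (s * s') v = sm s (sm s' v)) \<and>
     (\<forall>v. sm 1 v = v) \<and>
     (\<forall>s s' v. sm (s + s') v = sm s v + sm s' v) \<and>
     (\<forall>s v v'. sm s (v + v') = sm s v + sm s v') \<and>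
     (\<forall>v. sm 0 v = 0) \<and>
     (\<forall>s. sm s 0 = 0) \<and>
     (\<forall>s f I. sm s (csV f I) = csV (\<lambda>i. sm s (f i)) I) \<and>
     (\<forall>f I v. sm (csS f I) v = csV (\<lambda>i. sm (f i) v) I)"

definition complete_ss_pair ::
  "((tag \<Rightarrow> 's::semiring_1) \<Rightarrow> tag set \<Rightarrow> 's) \<Rightarrow> ((tag \<Rightarrow> 'v::comm_monoid_add) \<Rightarrow> tag set \<Rightarrow> 'v)
     \<Rightarrow> ('s \<Rightarrow> 'v \<Rightarrow> 'v) \<Rightarrow> ((nat \<Rightarrow> 's) \<Rightarrow> 'v) \<Rightarrow> bool" where
  "complete_ss_pair csS csV sm ip \<longleftrightarrow>
     complete_semiring csS \<and> complete_semimodule csS csV sm \<and>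
     (\<forall>s. ip s = sm (s 0) (ip (\<lambda>j. s (Suc j)))) \<and>
     (\<forall>s k. strict_mono k \<and> k 0 = 0 \<longrightarrow>
        ip s = ip (\<lambda>j. prod_list (map s [k j..<k (Suc j)]))) \<and>
     (\<forall>(f :: nat \<Rightarrow> tag \<Rightarrow> 's) (I :: nat \<Rightarrow> tag set).
        ip (\<lambda>j. csS (f j) (I j)) = gsum csV (\<lambda>\<sigma>. ip (\<lambda>j. f j (\<sigma> j))) {\<sigma>. \<forall>j. \<sigma> j \<in> I j})"

definition mm :: "nat \<Rightarrow> (nat \<Rightarrow> nat \<Rightarrow> 's::semiring_1) \<Rightarrow> (nat \<Rightarrow> nat \<Rightarrow> 's) \<Rightarrow> nat \<Rightarrow> nat \<Rightarrow> 's" where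
  "mm n A B i j = (\<Sum>k = 1..n. A i k * B k j)"

definition idm :: "nat \<Rightarrow> nat \<Rightarrow> 's::semiring_1" where
  "idm i j = (if i = j then 1 else 0)"

definition word_mat :: "nat \<Rightarrow> ('g \<Rightarrow> nat \<Rightarrow> nat \<Rightarrow> 's::semiring_1) \<Rightarrow> 'g list \<Rightarrow> nat \<Rightarrow> nat \<Rightarrow> 's" where
  "word_mat n x \<pi> = foldr (mm n) (map x \<pi>) idm"

definition mv :: "('s \<Rightarrow> 'v \<Rightarrow> 'v) \<Rightarrow> nat \<Rightarrow> (nat \<Rightarrow> nat \<Rightarrow> 's) \<Rightarrow> (nat \<Rightarrow> 'v::comm_monoid_add) \<Rightarrow> nat \<Rightarrow> 'v" where
  "mv sm n A v i = (\<Sum>k = 1..n. sm (A i k) (v k))"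

text \<open>A Gamma* x Gamma* matrix with n x n blocks: M pi1 pi2 i j = (M_{pi1,pi2})_{i,j}.\<close>
definition pushdown_matrix :: "nat \<Rightarrow> ('g list \<Rightarrow> 'g list \<Rightarrow> nat \<Rightarrow> nat \<Rightarrow> 's::zero) \<Rightarrow> bool" where
  "pushdown_matrix n M \<longleftrightarrow>
     (\<forall>p. finite {\<pi>. \<exists>i\<in>{1..n}. \<exists>j\<in>{1..n}. M [p] \<pi> i j \<noteq> 0}) \<and>
     (\<forall>p \<pi> \<pi>'. \<forall>i\<in>{1..n}. \<forall>j\<in>{1..n}. M (p # \<pi>') (\<pi> @ \<pi>') i j = M [p] \<pi> i j) \<and>
     (\<forall>\<pi>1 \<pi>2. (\<nexists>p \<pi> \<pi>'. \<pi>1 = p # \<pi>' \<and> \<pi>2 = \<pi> @ \<pi>') \<longrightarrow>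
        (\<forall>i\<in>{1..n}. \<forall>j\<in>{1..n}. M \<pi>1 \<pi>2 i j = 0))"

definition omega_pda :: "'s::zero set \<Rightarrow> nat \<Rightarrow> (nat \<Rightarrow> 's) \<Rightarrow> ('g list \<Rightarrow> 'g list \<Rightarrow> nat \<Rightarrow> nat \<Rightarrow> 's)
     \<Rightarrow> (nat \<Rightarrow> 's) \<Rightarrow> nat \<Rightarrow> bool" where
  "omega_pda S' n I M P l \<longleftrightarrow> n \<ge> 1 \<and> l \<le> n \<and> pushdown_matrix n M \<and>
     (\<forall>\<pi>1 \<pi>2. \<forall>i\<in>{1..n}. \<forall>j\<in>{1..n}. M \<pi>1 \<pi>2 i j \<in> S') \<and>
     (\<forall>i\<in>{1..n}. I i \<in> S') \<and> (\<forall>j\<in>{1..n}. P j \<in> S')"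

definition blockmul :: "((tag \<Rightarrow> 's::semiring_1) \<Rightarrow> tag set \<Rightarrow> 's) \<Rightarrow> nat
     \<Rightarrow> ('g list \<Rightarrow> 'g list \<Rightarrow> nat \<Rightarrow> nat \<Rightarrow> 's) \<Rightarrow> ('g list \<Rightarrow> 'g list \<Rightarrow> nat \<Rightarrow> nat \<Rightarrow> 's)
     \<Rightarrow> 'g list \<Rightarrow> 'g list \<Rightarrow> nat \<Rightarrow> nat \<Rightarrow> 's" where
  "blockmul csS n A B \<pi> \<pi>' i j = gsum csS (\<lambda>\<pi>''. \<Sum>k = 1..n. A \<pi> \<pi>'' i k * B \<pi>'' \<pi>' k j) UNIV"

fun mpow :: "((tag \<Rightarrow> 's::semiring_1) \<Rightarrow> tag set \<Rightarrow> 's) \<Rightarrow> nat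
     \<Rightarrow> ('g list \<Rightarrow> 'g list \<Rightarrow> nat \<Rightarrow> nat \<Rightarrow> 's) \<Rightarrow> nat \<Rightarrow> 'g list \<Rightarrow> 'g list \<Rightarrow> nat \<Rightarrow> nat \<Rightarrow> 's" where
  "mpow csS n M 0 = (\<lambda>\<pi> \<pi>' i j. if \<pi> = \<pi>' \<and> i = j then 1 else 0)"
| "mpow csS n M (Suc m) = blockmul csS n (mpow csS n M m) M"

definition mstar :: "((tag \<Rightarrow> 's::semiring_1) \<Rightarrow> tag set \<Rightarrow> 's) \<Rightarrow> nat
     \<Rightarrow> ('g list \<Rightarrow> 'g list \<Rightarrow> nat \<Rightarrow> nat \<Rightarrow> 's) \<Rightarrow> 'g list \<Rightarrow> 'g list \<Rightarrow> nat \<Rightarrow> nat \<Rightarrow> 's" where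
  "mstar csS n M \<pi> \<pi>' i j = gsum csS (\<lambda>m. mpow csS n M m \<pi> \<pi>' i j) UNIV"

text \<open>P_l, state sequences (j_1, j_2, ...) stored 0-indexed\<close>
definition Pl :: "nat \<Rightarrow> nat \<Rightarrow> (nat \<Rightarrow> nat) set" where
  "Pl n l = {js. (\<forall>t. js t \<in> {1..n}) \<and> infinite {t. js t \<le> l}}"

text \<open>((M^{omega,l})_pi)_i; ps t = pi_{t+1}, js t = j_{t+1}, pi_0 = pi, j_0 = i\<close>
definition momega :: "((tag \<Rightarrow> 'v::comm_monoid_add) \<Rightarrow> tag set \<Rightarrow> 'v) \<Rightarrow> ((nat \<Rightarrow> 's) \<Rightarrow> 'v) \<Rightarrow> nat \<Rightarrow> nat
     \<Rightarrow> ('g list \<Rightarrow> 'g list \<Rightarrow> nat \<Rightarrow> nat \<Rightarrow> 's) \<Rightarrow> 'g list \<Rightarrow> nat \<Rightarrow> 'v" where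
  "momega csV ip n l M \<pi> i =
     gsum csV (\<lambda>ps. gsum csV (\<lambda>js.
        ip (\<lambda>t. M (if t = 0 then \<pi> else ps (t - 1)) (ps t) (if t = 0 then i else js (t - 1)) (js t)))
       (Pl n l)) UNIV"

definition behavior :: "((tag \<Rightarrow> 's::semiring_1) \<Rightarrow> tag set \<Rightarrow> 's) \<Rightarrow> ((tag \<Rightarrow> 'v::comm_monoid_add) \<Rightarrow> tag set \<Rightarrow> 'v)
     \<Rightarrow> ('s \<Rightarrow> 'v \<Rightarrow> 'v) \<Rightarrow> ((nat \<Rightarrow> 's) \<Rightarrow> 'v) \<Rightarrow> nat \<Rightarrow> (nat \<Rightarrow> 's)
     \<Rightarrow> ('g list \<Rightarrow> 'g list \<Rightarrow> nat \<Rightarrow> nat \<Rightarrow> 's) \<Rightarrow> (nat \<Rightarrow> 's) \<Rightarrow> 'g \<Rightarrow> nat \<Rightarrow> 's \<times> 'v" where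
  "behavior csS csV sm ip n I M P p0 l =
     ((\<Sum>i = 1..n. \<Sum>j = 1..n. I i * mstar csS n M [p0] [] i j * P j),
      (\<Sum>i = 1..n. sm (I i) (momega csV ip n l M [p0] i)))"

end

(* A computation emptying the stack [p] makes a first transition to some stack pi and then
   empties pi.  Emptying rho @ pi means emptying rho and afterwards pi, so by a Cauchy product
   argument on the powers of M the block of M^star at (pi, []) is x_{p_1} ... x_{p_k}; this gives
   the equation for x.  An infinite computation from p # rho either never visits the stack rho,
   and then, since transitions only read the top of the stack, it is a computation from [p] with
   rho appended to every stack; or it visits rho for the first time after T + 1 steps, and its
   finite part is a computation from [p] to the empty stack.  Summing over T gives
   z_{p rho} = z_p + x_p z_rho, hence z_pi = sum_j x_{p_1} ... x_{p_(j-1)} z_{p_j}, and a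
   first-step decomposition of z_p yields the equation for z. *)

theory Submission
  imports Defs "HOL-Library.Countable" "HOL-Library.Omega_Words_Fun"
begin

(* gsum transports a sum along an arbitrary injection into tag; over index types that admit
   such an injection it behaves as a genuine complete sum. *)
class tag_embeddable =
  assumes ex_inj_tag: "\<exists>e :: 'a \<Rightarrow> tag. inj e"

instance countable \<subseteq> tag_embeddable
proof
  have "inj (\<lambda>(x::'a) (_::nat). to_nat x)" by (auto simp: inj_def dest!: fun_cong)
  then show "\<exists>e :: 'a \<Rightarrow> tag. inj e" by blast
qed

instance prod :: (tag_embeddable, tag_embeddable) tag_embeddable
proof
  obtain e1 :: "'a \<Rightarrow> tag" and e2 :: "'b \<Rightarrow> tag" where "inj e1" "inj e2"
    using ex_inj_tag by metis
  then have "inj (\<lambda>(a, b) m. prod_encode (e1 a m, e2 b m))"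
    by (auto simp: inj_def fun_eq_iff prod_encode_eq)
  then show "\<exists>e :: 'a \<times> 'b \<Rightarrow> tag. inj e" by blast
qed

instance "fun" :: (countable, tag_embeddable) tag_embeddable
proof
  obtain e :: "'b \<Rightarrow> tag" where e: "inj e"
    using ex_inj_tag by metis
  have "inj (\<lambda>(f :: 'a \<Rightarrow> 'b) m. e (f (from_nat (fst (prod_decode m)))) (snd (prod_decode m)))"
  proof (rule injI)
    fix f g :: "'a \<Rightarrow> 'b"
    assume eq: "(\<lambda>m. e (f (from_nat (fst (prod_decode m)))) (snd (prod_decode m)))
      = (\<lambda>m. e (g (from_nat (fst (prod_decode m)))) (snd (prod_decode m)))"
    show "f = g"
    proof
      fix x
      have "e (f x) = e (g x)"
        using fun_cong[OF eq, of "prod_encode (to_nat x, _)"] by auto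
      then show "f x = g x" using e by (simp add: inj_eq)
    qed
  qed
  then show "\<exists>e :: ('a \<Rightarrow> 'b) \<Rightarrow> tag. inj e" by blast
qed

definition tag_emb :: "'i \<Rightarrow> tag" where
  "tag_emb = (SOME e. inj e)"

lemma inj_tag_emb: "inj (tag_emb :: 'i::tag_embeddable \<Rightarrow> tag)"
  unfolding tag_emb_def by (rule someI_ex[OF ex_inj_tag])

lemma inv_tag_emb [simp]: "inv tag_emb (tag_emb (i::'i::tag_embeddable)) = i"
  by (rule inv_f_f[OF inj_tag_emb])

lemma gsum_via_tag_emb: "gsum cs f I = cs (\<lambda>t. f (inv tag_emb t)) (tag_emb ` I)"
  by (simp add: gsum_def tag_emb_def Let_def)

locale complete_sum =
  fixes cs :: "(tag \<Rightarrow> 'a::comm_monoid_add) \<Rightarrow> tag set \<Rightarrow> 'a"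
  assumes complete: "complete_monoid cs"
begin

lemmas complete_monoid_laws = complete[unfolded complete_monoid_def]

lemma cs_cong: "(\<And>t. t \<in> I \<Longrightarrow> f t = g t) \<Longrightarrow> cs f I = cs g I"
  using complete_monoid_laws[THEN conjunct1] by blast

lemma cs_empty: "cs f {} = 0"
  using complete_monoid_laws[THEN conjunct2, THEN conjunct1] by blast

lemma cs_singleton: "cs f {t} = f t"
  using complete_monoid_laws[THEN conjunct2, THEN conjunct2, THEN conjunct1] by blast

lemma cs_doubleton: "t \<noteq> u \<Longrightarrow> cs f {t, u} = f t + f u"
  using complete_monoid_laws[THEN conjunct2, THEN conjunct2, THEN conjunct2, THEN conjunct1] by blast

lemma cs_UN_disjoint:
  "(\<And>j j'. j \<in> J \<Longrightarrow> j' \<in> J \<Longrightarrow> j \<noteq> j' \<Longrightarrow> B j \<inter> B j' = {})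
   \<Longrightarrow> cs f (\<Union>j\<in>J. B j) = cs (\<lambda>j. cs f (B j)) J"
  using complete_monoid_laws[THEN conjunct2, THEN conjunct2, THEN conjunct2, THEN conjunct2] by blast

lemma gsum_cong: "(\<And>i. i \<in> I \<Longrightarrow> f i = g i) \<Longrightarrow> gsum cs f (I::'i::tag_embeddable set) = gsum cs g I"
  unfolding gsum_via_tag_emb by (rule cs_cong) auto

lemma gsum_empty: "gsum cs f {} = 0"
  unfolding gsum_via_tag_emb by (simp add: cs_empty)

lemma gsum_singleton: "gsum cs f {i::'i::tag_embeddable} = f i"
  unfolding gsum_via_tag_emb by (simp add: cs_singleton)

lemma gsum_neutral: "(\<And>i. i \<in> I \<Longrightarrow> f i = 0) \<Longrightarrow> gsum cs f (I::'i::tag_embeddable set) = 0"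
proof -
  assume "\<And>i. i \<in> I \<Longrightarrow> f i = 0"
  then have "gsum cs f I = cs (\<lambda>_. cs (\<lambda>_. 0) {}) (tag_emb ` I)"
    unfolding gsum_via_tag_emb by (intro cs_cong) (auto simp: cs_empty)
  also have "\<dots> = cs (\<lambda>_. 0) (\<Union>t\<in>tag_emb ` I. {})"
    by (rule cs_UN_disjoint[symmetric]) auto
  finally show ?thesis by (simp add: cs_empty)
qed

lemma gsum_UN_disjoint:
  fixes B :: "'j::tag_embeddable \<Rightarrow> 'i::tag_embeddable set"
  assumes "\<And>j j'. j \<in> J \<Longrightarrow> j' \<in> J \<Longrightarrow> j \<noteq> j' \<Longrightarrow> B j \<inter> B j' = {}"
  shows "gsum cs f (\<Union>j\<in>J. B j) = gsum cs (\<lambda>j. gsum cs f (B j)) J"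
proof -
  have "tag_emb ` (\<Union>j\<in>J. B j) = (\<Union>t\<in>tag_emb ` J. tag_emb ` B (inv tag_emb t))"
    by auto
  moreover have "cs (\<lambda>t. f (inv tag_emb t)) (\<Union>t\<in>tag_emb ` J. tag_emb ` B (inv tag_emb t)) =
        cs (\<lambda>t. cs (\<lambda>t. f (inv tag_emb t)) (tag_emb ` B (inv tag_emb t))) (tag_emb ` J)"
  proof (rule cs_UN_disjoint)
    fix s t assume "s \<in> tag_emb ` J" "t \<in> tag_emb ` J" "s \<noteq> t"
    then obtain j j' where "j \<in> J" "j' \<in> J" "j \<noteq> j'" "s = tag_emb j" "t = tag_emb j'"
      by auto
    then show "tag_emb ` B (inv tag_emb s) \<inter> tag_emb ` B (inv tag_emb t) = {}"
      using assms by (simp add: image_Int[OF inj_tag_emb, symmetric])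
  qed
  ultimately show ?thesis unfolding gsum_via_tag_emb by simp
qed

lemma gsum_reindex:
  fixes h :: "'j::tag_embeddable \<Rightarrow> 'i::tag_embeddable"
  assumes "inj_on h J"
  shows "gsum cs f (h ` J) = gsum cs (\<lambda>j. f (h j)) J"
proof -
  have "h ` J = (\<Union>j\<in>J. {h j})" by blast
  also have "gsum cs f \<dots> = gsum cs (\<lambda>j. gsum cs f {h j}) J"
    using assms by (intro gsum_UN_disjoint) (auto simp: inj_on_def)
  finally show ?thesis by (simp add: gsum_singleton)
qed

lemma gsum_reindex_bij_betw:
  fixes h :: "'j::tag_embeddable \<Rightarrow> 'i::tag_embeddable"
  assumes "bij_betw h J I"
  shows "gsum cs f I = gsum cs (\<lambda>j. f (h j)) J"
  using gsum_reindex[of h J f] assms by (simp add: bij_betw_def)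

lemma gsum_Un_disjoint:
  assumes "A \<inter> B = {}"
  shows "gsum cs f (A \<union> B :: 'i::tag_embeddable set) = gsum cs f A + gsum cs f B"
proof -
  have "gsum cs f (\<Union>b\<in>{True, False}. if b then A else B)
      = gsum cs (\<lambda>b. gsum cs f (if b then A else B)) {True, False}"
    using assms by (intro gsum_UN_disjoint) auto
  moreover have "tag_emb True \<noteq> tag_emb False"
    using inj_tag_emb[where 'i=bool] by (auto simp: inj_eq)
  ultimately show ?thesis by (simp add: gsum_via_tag_emb cs_doubleton Un_commute)
qed

lemma gsum_insert: "(i::'i::tag_embeddable) \<notin> F \<Longrightarrow> gsum cs f (insert i F) = f i + gsum cs f F"
  using gsum_Un_disjoint[of "{i}" F f] by (simp add: gsum_singleton)

lemma gsum_eq_sum: "finite (F::'i::tag_embeddable set) \<Longrightarrow> gsum cs f F = sum f F"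
  by (induction F rule: finite_induct) (simp_all add: gsum_empty gsum_insert)

lemma gsum_mono_neutral:
  assumes "J \<subseteq> I" and "\<And>i. i \<in> I - J \<Longrightarrow> f i = 0"
  shows "gsum cs f (I::'i::tag_embeddable set) = gsum cs f J"
proof -
  have "I = J \<union> (I - J)" using assms(1) by blast
  then have "gsum cs f I = gsum cs f J + gsum cs f (I - J)"
    by (metis gsum_Un_disjoint Diff_disjoint)
  then show ?thesis using gsum_neutral[of "I - J" f] assms(2) by simp
qed

lemma gsum_Sigma:
  "gsum cs f (Sigma (I::'i::tag_embeddable set) (B::'i \<Rightarrow> 'j::tag_embeddable set))
   = gsum cs (\<lambda>i. gsum cs (\<lambda>j. f (i, j)) (B i)) I"
proof -
  have "Sigma I B = (\<Union>i\<in>I. Pair i ` B i)" by auto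
  also have "gsum cs f \<dots> = gsum cs (\<lambda>i. gsum cs f (Pair i ` B i)) I"
    by (rule gsum_UN_disjoint) auto
  also have "\<dots> = gsum cs (\<lambda>i. gsum cs (\<lambda>j. f (i, j)) (B i)) I"
    by (intro gsum_cong gsum_reindex) (simp add: inj_on_def)
  finally show ?thesis .
qed

lemma gsum_swap:
  "gsum cs (\<lambda>i. gsum cs (f i) J) (I::'i::tag_embeddable set)
   = gsum cs (\<lambda>j. gsum cs (\<lambda>i. f i j) I) (J::'j::tag_embeddable set)"
proof -
  have "gsum cs (\<lambda>(i, j). f i j) (I \<times> J) = gsum cs (\<lambda>x. (\<lambda>(i, j). f i j) (prod.swap x)) (J \<times> I)"
    by (rule gsum_reindex_bij_betw) (simp add: bij_betw_def product_swap)
  then show ?thesis by (simp add: gsum_Sigma split_def)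
qed

lemma gsum_add:
  "gsum cs (\<lambda>i. f i + g i) (I::'i::tag_embeddable set) = gsum cs f I + gsum cs g I"
proof -
  have bool: "gsum cs h (UNIV::bool set) = h True + h False" for h :: "bool \<Rightarrow> 'a"
    using gsum_insert[of True "{False}" h] by (simp add: UNIV_bool insert_commute gsum_singleton)
  have "gsum cs (\<lambda>i. f i + g i) I = gsum cs (\<lambda>i. gsum cs (\<lambda>b. if b then f i else g i) UNIV) I"
    by (simp add: bool)
  also have "\<dots> = gsum cs f I + gsum cs g I"
    by (subst gsum_swap) (simp add: bool)
  finally show ?thesis .
qed

lemma gsum_sum_swap:
  "finite K \<Longrightarrow> gsum cs (\<lambda>i. \<Sum>k\<in>K. f i k) (I::'i::tag_embeddable set) = (\<Sum>k\<in>K. gsum cs (\<lambda>i. f i k) I)"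
  by (induction K rule: finite_induct) (simp_all add: gsum_neutral gsum_add)

lemma gsum_convolution:
  fixes g :: "nat \<Rightarrow> nat \<Rightarrow> 'a"
  shows "gsum cs (\<lambda>m. \<Sum>m1\<le>m. g m1 (m - m1)) UNIV = gsum cs (\<lambda>a. gsum cs (g a) UNIV) UNIV"
proof -
  have bij: "bij_betw (\<lambda>(a, b). (a + b, a)) (UNIV \<times> UNIV) (SIGMA m:UNIV. {..m::nat})"
    by (rule bij_betw_byWitness[where f' = "\<lambda>(m, m1). (m1, m - m1)"]) auto
  then have "gsum cs (\<lambda>(m, m1). g m1 (m - m1)) (SIGMA m:UNIV. {..m})
      = gsum cs (\<lambda>(a, b). g a b) (UNIV \<times> UNIV)"
    using gsum_reindex_bij_betw[OF bij, of "\<lambda>(m, m1). g m1 (m - m1)"] by (simp add: split_def)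
  then show ?thesis
    unfolding gsum_Sigma by (simp add: gsum_eq_sum)
qed

end

locale semiring_semimodule_pair =
  fixes csS :: "(tag \<Rightarrow> 's::semiring_1) \<Rightarrow> tag set \<Rightarrow> 's"
    and csV :: "(tag \<Rightarrow> 'v::comm_monoid_add) \<Rightarrow> tag set \<Rightarrow> 'v"
    and sm :: "'s \<Rightarrow> 'v \<Rightarrow> 'v"
    and ip :: "(nat \<Rightarrow> 's) \<Rightarrow> 'v"
  assumes pair: "complete_ss_pair csS csV sm ip"
begin

lemma complete_semiring: "complete_semiring csS"
  using pair unfolding complete_ss_pair_def by blast

lemma complete_semimodule: "complete_semimodule csS csV sm"
  using pair unfolding complete_ss_pair_def by blast

sublocale S: complete_sum csS
  using complete_semiring unfolding complete_semiring_def by unfold_locales blast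

sublocale V: complete_sum csV
  using complete_semimodule unfolding complete_semimodule_def by unfold_locales blast

lemmas semimodule_laws = complete_semimodule[unfolded complete_semimodule_def]

lemma sm_mult: "sm (s * s') v = sm s (sm s' v)"
  using semimodule_laws by (elim conjE) blast

lemma sm_one [simp]: "sm 1 v = v"
  using semimodule_laws by (elim conjE) blast

lemma sm_add_left: "sm (s + s') v = sm s v + sm s' v"
  using semimodule_laws by (elim conjE) blast

lemma sm_add_right: "sm s (v + v') = sm s v + sm s v'"
  using semimodule_laws by (elim conjE) blast

lemma sm_zero_left [simp]: "sm 0 v = 0"
  using semimodule_laws by (elim conjE) blast

lemma sm_zero_right [simp]: "sm s 0 = 0"
  using semimodule_laws by (elim conjE) blast

lemma sm_gsum: "sm s (gsum csV f I) = gsum csV (\<lambda>i. sm s (f i)) I"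
  using semimodule_laws unfolding gsum_via_tag_emb by (elim conjE) blast

lemma gsum_sm: "sm (gsum csS f I) v = gsum csV (\<lambda>i. sm (f i) v) I"
  using semimodule_laws unfolding gsum_via_tag_emb by (elim conjE) blast

lemma sm_sum: "sm s (\<Sum>k\<in>K. f k) = (\<Sum>k\<in>K. sm s (f k))"
  by (induction K rule: infinite_finite_induct) (auto simp: sm_add_right)

lemma sum_sm: "sm (\<Sum>k\<in>K. f k) v = (\<Sum>k\<in>K. sm (f k) v)"
  by (induction K rule: infinite_finite_induct) (auto simp: sm_add_left)

lemma gsum_product:
  "gsum csS f (I::'i::tag_embeddable set) * gsum csS g (J::'j::tag_embeddable set)
   = gsum csS (\<lambda>i. gsum csS (\<lambda>j. f i * g j) J) I"
proof -
  have "gsum csS f I * gsum csS g J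
      = gsum csS (\<lambda>(a, b). f (inv tag_emb a) * g (inv tag_emb b)) (tag_emb ` I \<times> tag_emb ` J)"
    using complete_semiring unfolding complete_semiring_def gsum_via_tag_emb[of csS] by blast
  also have "tag_emb ` I \<times> tag_emb ` J = map_prod tag_emb tag_emb ` (I \<times> J)"
    by (rule map_prod_surj_on[OF refl refl, symmetric])
  also have "gsum csS (\<lambda>(a, b). f (inv tag_emb a) * g (inv tag_emb b)) \<dots>
      = gsum csS (\<lambda>(i, j). f i * g j) (I \<times> J)"
    by (subst S.gsum_reindex) (auto simp: inj_on_def inj_eq[OF inj_tag_emb] intro: S.gsum_cong)
  finally show ?thesis by (simp add: S.gsum_Sigma)
qed

lemma gsum_distrib_left: "c * gsum csS f (I::'i::tag_embeddable set) = gsum csS (\<lambda>i. c * f i) I"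
  using gsum_product[of "\<lambda>_. c" "{()}" f I] by (simp add: S.gsum_singleton)

lemma gsum_distrib_right: "gsum csS f (I::'i::tag_embeddable set) * c = gsum csS (\<lambda>i. f i * c) I"
  using gsum_product[of f I "\<lambda>_. c" "{()}"] by (simp add: S.gsum_singleton)

lemma ip_Cons: "ip s = sm (s 0) (ip (\<lambda>j. s (Suc j)))"
  using pair unfolding complete_ss_pair_def by blast

lemma ip_prefix_suffix: "ip s = sm (prod_list (prefix m s)) (ip (suffix m s))"
proof (induction m arbitrary: s)
  case 0
  then show ?case by (simp add: subsequence_def suffix_def)
next
  case (Suc m)
  have "ip s = sm (s 0) (sm (prod_list (prefix m (suffix 1 s))) (ip (suffix m (suffix 1 s))))"
    using ip_Cons[of s] Suc[of "suffix 1 s"] by (simp add: suffix_def)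
  also have "\<dots> = sm (prod_list (prefix (Suc m) s)) (ip (suffix (Suc m) s))"
    by (simp add: sm_mult subsequence_def map_upt_Suc suffix_def del: upt_Suc)
  finally show ?case .
qed

lemma ip_eq_zero: "s t = 0 \<Longrightarrow> ip s = 0"
  using ip_prefix_suffix[of s "Suc t"] by (simp add: subsequence_def)

end

lemma if_one_mult: "(if P then 1 else 0) * x = (if P then x else (0::'a::semiring_1))"
  by simp

lemma mult_if_one: "x * (if P then 1 else 0) = (if P then x else (0::'a::semiring_1))"
  by simp

lemma sum_swap3:
  "(\<Sum>k\<in>A. \<Sum>m\<in>B. \<Sum>l\<in>C. f k m l) = (\<Sum>m\<in>B. \<Sum>l\<in>C. \<Sum>k\<in>A. f k m l)"
  by (subst sum.swap) (rule sum.cong[OF refl], rule sum.swap)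

lemma prod_list_eq_zero: "(0::'a::semiring_1) \<in> set xs \<Longrightarrow> prod_list xs = 0"
  by (induction xs) auto

definition proper_suffix :: "'a list \<Rightarrow> 'a list \<Rightarrow> bool" where
  "proper_suffix xs ys \<longleftrightarrow> (\<exists>zs. zs \<noteq> [] \<and> ys = zs @ xs)"

lemma exists_first_exit:
  fixes s :: "nat \<Rightarrow> 'a list"
  assumes "proper_suffix r (s 0)" "\<not> proper_suffix r (s T)" "\<forall>t\<le>T. s t \<noteq> r"
  shows "\<exists>t. 0 < t \<and> t \<le> T \<and> proper_suffix r (s (t - 1)) \<and> \<not> proper_suffix r (s t) \<and> s t \<noteq> r"
proof -
  define t where "t = (LEAST t. \<not> proper_suffix r (s t))"
  have exit: "\<not> proper_suffix r (s t)"
    unfolding t_def by (rule LeastI[of _ T]) (rule assms(2))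
  have "t \<le> T"
    unfolding t_def by (rule Least_le) (rule assms(2))
  moreover have "0 < t"
    using exit assms(1) by (cases t) auto
  moreover have "proper_suffix r (s (t - 1))"
    using not_less_Least[of "t - 1" "\<lambda>t. \<not> proper_suffix r (s t)"] \<open>0 < t\<close>
    unfolding t_def[symmetric] by simp
  ultimately show ?thesis using exit assms(3) by blast
qed

lemma proper_suffixes_eq_map_append:
  assumes "\<forall>c \<in> set (butlast cs). proper_suffix \<rho> c" "cs \<noteq> []" "last cs = \<rho>"
  obtains cs' where "cs = map (\<lambda>c. c @ \<rho>) cs'" "[] \<notin> set (butlast cs')" "last cs' = []"
proof -
  have "set cs = insert \<rho> (set (butlast cs))"
    using assms(2,3) by (induction cs rule: rev_induct) auto
  then have "\<forall>c \<in> set cs. \<exists>\<tau>. c = \<tau> @ \<rho>"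
    using assms(1) unfolding proper_suffix_def by auto
  then have "\<exists>cs'. cs = map (\<lambda>c. c @ \<rho>) cs'" by (simp add: ex_map_conv)
  then obtain cs' where cs': "cs = map (\<lambda>c. c @ \<rho>) cs'" ..
  moreover have "[] \<notin> set (butlast cs')"
    using assms(1) cs' unfolding proper_suffix_def by (auto simp: map_butlast[symmetric])
  moreover have "last cs' = []"
    using assms(2,3) cs' by (simp add: last_map)
  ultimately show thesis by (rule that)
qed

lemma nth_in_set_butlast: "Suc t < length xs \<Longrightarrow> xs ! t \<in> set (butlast xs)"
  using nth_mem[of t "butlast xs"] by (simp add: nth_butlast)

lemma first_visit_prefix_iff:
  "last (prefix (Suc T) ps) = \<rho> \<and> \<rho> \<notin> set (butlast (prefix (Suc T) ps)) \<longleftrightarrow> ps T = \<rho> \<and> (\<forall>t<T. ps t \<noteq> \<rho>)"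
proof -
  have "butlast (prefix (Suc T) ps) = prefix T ps" "last (prefix (Suc T) ps) = ps T"
    and "\<rho> \<notin> set (prefix T ps) \<longleftrightarrow> (\<forall>t<T. ps t \<noteq> \<rho>)"
    by (auto simp: subsequence_def)
  then show ?thesis by simp
qed

lemma infinite_shift_iff: "infinite {t. P (m + t)} \<longleftrightarrow> infinite {t::nat. P t}"
  unfolding INFM_iff_infinite[symmetric] INFM_nat
  by (metis add_diff_inverse_nat less_diff_conv not_less_iff_gr_or_eq trans_less_add2)

lemma conc_in_Pl_iff: "ks \<frown> js \<in> Pl n l \<longleftrightarrow> set ks \<subseteq> {1..n} \<and> js \<in> Pl n l"
proof -
  have "infinite {t. (ks \<frown> js) t \<le> l} \<longleftrightarrow> infinite {t. js t \<le> l}"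
    using infinite_shift_iff[of "\<lambda>t. (ks \<frown> js) t \<le> l" "length ks"] by simp
  moreover have "(\<forall>t. (ks \<frown> js) t \<in> {1..n}) \<longleftrightarrow> set ks \<subseteq> {1..n} \<and> (\<forall>t. js t \<in> {1..n})"
  proof -
    have "(\<forall>t. (ks \<frown> js) t \<in> {1..n}) \<longleftrightarrow> range (ks \<frown> js) \<subseteq> {1..n}" by blast
    also have "\<dots> \<longleftrightarrow> set ks \<subseteq> {1..n} \<and> range js \<subseteq> {1..n}" by simp
    finally show ?thesis by blast
  qed
  ultimately show ?thesis by (simp add: Pl_def)
qed

lemma suffix_in_Pl: "js \<in> Pl n l \<Longrightarrow> suffix m js \<in> Pl n l"
  using infinite_shift_iff[of "\<lambda>t. js t \<le> l" m] unfolding Pl_def by (simp add: suffix_def)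

lemma build_conc_shift: "length xs = m \<Longrightarrow> (a ## xs \<frown> w) (m + t) = (last (a # xs) ## w) t"
  by (cases t) (auto simp: last_conv_nth nth_Cons' simp flip: build_cons)

lemma build_in_Pl_range: "i \<in> {1..n} \<Longrightarrow> js \<in> Pl n l \<Longrightarrow> (i ## js) t \<in> {1..n}"
  by (cases t) (auto simp: Pl_def)

type_synonym ('g, 's) block_matrix = "'g list \<Rightarrow> 'g list \<Rightarrow> nat \<Rightarrow> nat \<Rightarrow> 's"

locale pushdown = semiring_semimodule_pair csS csV sm ip
  for csS :: "(tag \<Rightarrow> 's::semiring_1) \<Rightarrow> tag set \<Rightarrow> 's"
    and csV :: "(tag \<Rightarrow> 'v::comm_monoid_add) \<Rightarrow> tag set \<Rightarrow> 'v"
    and sm ip +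
  fixes n :: nat
    and M :: "'g::countable list \<Rightarrow> 'g list \<Rightarrow> nat \<Rightarrow> nat \<Rightarrow> 's"
  assumes pushdown: "pushdown_matrix n M"
begin

lemma M_Nil_source: "i \<in> {1..n} \<Longrightarrow> j \<in> {1..n} \<Longrightarrow> M [] \<pi> i j = 0"
  using pushdown unfolding pushdown_matrix_def by blast

lemma M_Cons_append: "i \<in> {1..n} \<Longrightarrow> j \<in> {1..n} \<Longrightarrow> M (q # \<rho>) (\<tau> @ \<rho>) i j = M [q] \<tau> i j"
  using pushdown unfolding pushdown_matrix_def by blast

lemma M_Cons_not_suffix:
  "i \<in> {1..n} \<Longrightarrow> j \<in> {1..n} \<Longrightarrow> \<nexists>\<tau>. \<pi> = \<tau> @ \<rho> \<Longrightarrow> M (q # \<rho>) \<pi> i j = 0"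
  using pushdown unfolding pushdown_matrix_def by blast

lemma M_append_append:
  assumes "\<sigma> \<noteq> []" "i \<in> {1..n}" "j \<in> {1..n}"
  shows "M (\<sigma> @ \<rho>) (\<tau> @ \<rho>) i j = M \<sigma> \<tau> i j"
proof -
  obtain q \<sigma>' where \<sigma>: "\<sigma> = q # \<sigma>'" using assms(1) by (cases \<sigma>) auto
  show ?thesis
  proof (cases "\<exists>\<tau>'. \<tau> = \<tau>' @ \<sigma>'")
    case True
    then show ?thesis using assms(2,3) by (auto simp: \<sigma> M_Cons_append)
  next
    case False
    then have "\<nexists>\<tau>'. \<tau> @ \<rho> = \<tau>' @ \<sigma>' @ \<rho>"
      by (metis append.assoc append_same_eq)
    then show ?thesis using False assms(2,3) by (simp add: \<sigma> M_Cons_not_suffix)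
  qed
qed

lemma M_leaves_suffix:
  assumes "proper_suffix \<rho> \<sigma>" "\<pi> \<noteq> \<rho>" "\<not> proper_suffix \<rho> \<pi>" "i \<in> {1..n}" "j \<in> {1..n}"
  shows "M \<sigma> \<pi> i j = 0"
proof -
  obtain q \<sigma>' where \<sigma>: "\<sigma> = q # \<sigma>' @ \<rho>"
    using assms(1) unfolding proper_suffix_def by (metis append_Cons neq_Nil_conv)
  have "\<nexists>\<tau>. \<pi> = \<tau> @ \<sigma>' @ \<rho>"
  proof
    assume "\<exists>\<tau>. \<pi> = \<tau> @ \<sigma>' @ \<rho>"
    then obtain \<tau> where "\<pi> = (\<tau> @ \<sigma>') @ \<rho>" by auto
    then show False using assms(2,3) unfolding proper_suffix_def by (cases "\<tau> @ \<sigma>' = []") auto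
  qed
  then show ?thesis using M_Cons_not_suffix[OF assms(4,5)] by (simp add: \<sigma>)
qed

abbreviation Mpow :: "nat \<Rightarrow> ('g, 's) block_matrix" where
  "Mpow m \<equiv> mpow csS n M m"

abbreviation bmul :: "('g, 's) block_matrix \<Rightarrow> ('g, 's) block_matrix \<Rightarrow> ('g, 's) block_matrix" where
  "bmul A B \<equiv> blockmul csS n A B"

lemma blockmul_assoc: "bmul (bmul A B) C \<pi> \<pi>' i j = bmul A (bmul B C) \<pi> \<pi>' i j"
proof -
  define F where "F \<rho> \<sigma> k l = A \<pi> \<sigma> i l * B \<sigma> \<rho> l k * C \<rho> \<pi>' k j" for \<rho> \<sigma> k l
  have "bmul (bmul A B) C \<pi> \<pi>' i j = gsum csS (\<lambda>\<rho>. gsum csS (\<lambda>\<sigma>. \<Sum>k=1..n. \<Sum>l=1..n. F \<rho> \<sigma> k l) UNIV) UNIV"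
    unfolding blockmul_def
    by (intro S.gsum_cong)
       (simp add: gsum_distrib_right sum_distrib_right F_def S.gsum_sum_swap)
  also have "\<dots> = gsum csS (\<lambda>\<sigma>. gsum csS (\<lambda>\<rho>. \<Sum>l=1..n. \<Sum>k=1..n. F \<rho> \<sigma> k l) UNIV) UNIV"
    by (subst S.gsum_swap) (rule S.gsum_cong, rule S.gsum_cong, rule sum.swap)
  also have "\<dots> = bmul A (bmul B C) \<pi> \<pi>' i j"
    unfolding blockmul_def
    by (intro S.gsum_cong)
       (simp add: gsum_distrib_left sum_distrib_left F_def mult.assoc S.gsum_sum_swap)
  finally show ?thesis .
qed

lemma blockmul_one_left: "i \<in> {1..n} \<Longrightarrow> bmul (Mpow 0) B \<pi> \<pi>' i j = B \<pi> \<pi>' i j"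
  unfolding blockmul_def
  by (subst S.gsum_mono_neutral[of "{\<pi>}"]) (auto simp: S.gsum_singleton if_one_mult)

lemma blockmul_one_right: "j \<in> {1..n} \<Longrightarrow> bmul A (Mpow 0) \<pi> \<pi>' i j = A \<pi> \<pi>' i j"
  unfolding blockmul_def
  by (subst S.gsum_mono_neutral[of "{\<pi>'}"]) (auto simp: S.gsum_singleton mult_if_one)

lemma blockmul_cong:
  "(\<And>\<rho> k. k \<in> {1..n} \<Longrightarrow> A \<pi> \<rho> i k = A' \<pi> \<rho> i k) \<Longrightarrow>
   (\<And>\<rho> k. k \<in> {1..n} \<Longrightarrow> B \<rho> \<pi>' k j = B' \<rho> \<pi>' k j) \<Longrightarrow>
   bmul A B \<pi> \<pi>' i j = bmul A' B' \<pi> \<pi>' i j"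
  unfolding blockmul_def by (intro S.gsum_cong sum.cong) auto

lemma mpow_Suc_left:
  "i \<in> {1..n} \<Longrightarrow> j \<in> {1..n} \<Longrightarrow> Mpow (Suc m) \<pi> \<pi>' i j = bmul M (Mpow m) \<pi> \<pi>' i j"
proof (induction m arbitrary: \<pi> \<pi>' i j)
  case 0
  then show ?case by (simp add: blockmul_one_left blockmul_one_right del: mpow.simps(1))
next
  case (Suc m)
  have "Mpow (Suc (Suc m)) \<pi> \<pi>' i j = bmul (Mpow (Suc m)) M \<pi> \<pi>' i j"
    by simp
  also have "\<dots> = bmul (bmul M (Mpow m)) M \<pi> \<pi>' i j"
    by (rule blockmul_cong) (simp_all add: Suc.IH[OF Suc.prems(1)] del: mpow.simps)
  also have "\<dots> = bmul M (Mpow (Suc m)) \<pi> \<pi>' i j"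
    by (simp add: blockmul_assoc)
  finally show ?case .
qed

lemmas mpow_Suc_left_gsum = mpow_Suc_left[unfolded blockmul_def]

lemma mpow_Nil_source:
  assumes "i \<in> {1..n}" "j \<in> {1..n}" "0 < m"
  shows "Mpow m [] \<pi> i j = 0"
proof -
  obtain m' where "m = Suc m'" using assms(3) by (cases m) auto
  have "Mpow (Suc m') [] \<pi> i j = 0"
    unfolding mpow_Suc_left_gsum[OF assms(1,2)] using assms(1)
    by (intro S.gsum_neutral) (simp add: M_Nil_source)
  then show ?thesis unfolding \<open>m = Suc m'\<close> .
qed

lemma gsum_Cons_source:
  assumes "i \<in> {1..n}"
  shows "gsum csS (\<lambda>\<pi>. \<Sum>k=1..n. M (q # \<rho>) \<pi> i k * F \<pi> k) UNIV
       = gsum csS (\<lambda>\<tau>. \<Sum>k=1..n. M [q] \<tau> i k * F (\<tau> @ \<rho>) k) UNIV"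
proof -
  have "gsum csS (\<lambda>\<pi>. \<Sum>k=1..n. M (q # \<rho>) \<pi> i k * F \<pi> k) UNIV
      = gsum csS (\<lambda>\<pi>. \<Sum>k=1..n. M (q # \<rho>) \<pi> i k * F \<pi> k) (range (\<lambda>\<tau>. \<tau> @ \<rho>))"
  proof (rule S.gsum_mono_neutral)
    fix \<pi> assume "\<pi> \<in> UNIV - range (\<lambda>\<tau>. \<tau> @ \<rho>)"
    then have "\<nexists>\<tau>. \<pi> = \<tau> @ \<rho>" by auto
    then show "(\<Sum>k=1..n. M (q # \<rho>) \<pi> i k * F \<pi> k) = 0"
      using M_Cons_not_suffix[OF assms] by simp
  qed simp
  also have "\<dots> = gsum csS (\<lambda>\<tau>. \<Sum>k=1..n. M [q] \<tau> i k * F (\<tau> @ \<rho>) k) UNIV"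
    using assms by (subst S.gsum_reindex) (auto simp: inj_on_def M_Cons_append intro!: S.gsum_cong sum.cong)
  finally show ?thesis .
qed

lemma mpow_append_source_Nil:
  assumes "i \<in> {1..n}" "j \<in> {1..n}"
  shows "Mpow m \<pi> [] i j = (\<Sum>m1\<le>m. \<Sum>k=1..n. Mpow m1 [] [] i k * Mpow (m - m1) \<pi> [] k j)"
proof -
  have "(\<Sum>m1\<le>m. \<Sum>k=1..n. Mpow m1 [] [] i k * Mpow (m - m1) \<pi> [] k j)
      = (\<Sum>m1\<in>{0}. \<Sum>k=1..n. Mpow m1 [] [] i k * Mpow (m - m1) \<pi> [] k j)"
    using assms(1) by (intro sum.mono_neutral_right) (auto simp: mpow_Nil_source simp del: mpow.simps)
  also have "\<dots> = Mpow m \<pi> [] i j"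
    using assms(1) by (simp add: if_one_mult del: mpow.simps(2))
  finally show ?thesis by simp
qed

lemma mpow_append_source:
  "i \<in> {1..n} \<Longrightarrow> j \<in> {1..n} \<Longrightarrow>
   Mpow m (\<rho> @ \<pi>) [] i j = (\<Sum>m1\<le>m. \<Sum>k=1..n. Mpow m1 \<rho> [] i k * Mpow (m - m1) \<pi> [] k j)"
proof (induction m arbitrary: \<rho> i j)
  case 0
  then show ?case
    by (cases \<rho>) (simp_all only: append_Nil mpow_append_source_Nil, simp)
next
  case (Suc m)
  show ?case
  proof (cases \<rho>)
    case Nil
    show ?thesis unfolding Nil append_Nil by (rule mpow_append_source_Nil[OF Suc.prems])
  next
    case (Cons q \<rho>')
    define G where "G \<tau> m1 k' k = M [q] \<tau> i k * Mpow m1 (\<tau> @ \<rho>') [] k k' * Mpow (m - m1) \<pi> [] k' j"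
      for \<tau> m1 k' k
    have step: "Mpow (Suc m1) \<rho> [] i k' = gsum csS (\<lambda>\<tau>. \<Sum>k=1..n. M [q] \<tau> i k * Mpow m1 (\<tau> @ \<rho>') [] k k') UNIV"
      if "k' \<in> {1..n}" for m1 k'
      unfolding Cons mpow_Suc_left_gsum[OF Suc.prems(1) that] by (rule gsum_Cons_source[OF Suc.prems(1)])
    have "Mpow (Suc m) (\<rho> @ \<pi>) [] i j = gsum csS (\<lambda>\<tau>. \<Sum>k=1..n. M [q] \<tau> i k * Mpow m (\<tau> @ \<rho>' @ \<pi>) [] k j) UNIV"
      unfolding Cons append_Cons mpow_Suc_left_gsum[OF Suc.prems] by (rule gsum_Cons_source[OF Suc.prems(1)])
    also have "\<dots> = gsum csS (\<lambda>\<tau>. \<Sum>k=1..n. \<Sum>m1\<le>m. \<Sum>k'=1..n. G \<tau> m1 k' k) UNIV"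
    proof (rule S.gsum_cong, rule sum.cong[OF refl])
      fix \<tau> k assume "k \<in> {1..n}"
      from Suc.IH[where \<rho> = "\<tau> @ \<rho>'" and i = k, OF this Suc.prems(2)]
      show "M [q] \<tau> i k * Mpow m (\<tau> @ \<rho>' @ \<pi>) [] k j = (\<Sum>m1\<le>m. \<Sum>k'=1..n. G \<tau> m1 k' k)"
        by (simp add: sum_distrib_left G_def mult.assoc)
    qed
    also have "\<dots> = gsum csS (\<lambda>\<tau>. \<Sum>m1\<le>m. \<Sum>k'=1..n. \<Sum>k=1..n. G \<tau> m1 k' k) UNIV"
      by (intro S.gsum_cong sum_swap3)
    also have "\<dots> = (\<Sum>m1\<le>m. \<Sum>k'=1..n. gsum csS (\<lambda>\<tau>. \<Sum>k=1..n. G \<tau> m1 k' k) UNIV)"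
      by (simp add: S.gsum_sum_swap)
    also have "\<dots> = (\<Sum>m1\<le>m. \<Sum>k'=1..n. Mpow (Suc m1) \<rho> [] i k' * Mpow (Suc m - Suc m1) \<pi> [] k' j)"
      by (intro sum.cong refl)
         (simp add: step gsum_distrib_right sum_distrib_right G_def del: mpow.simps(2))
    also have "\<dots> = (\<Sum>m1\<le>Suc m. \<Sum>k'=1..n. Mpow m1 \<rho> [] i k' * Mpow (Suc m - m1) \<pi> [] k' j)"
      by (subst sum.atMost_Suc_shift) (simp add: Cons)
    finally show ?thesis .
  qed
qed

lemma mstar_append_source:
  assumes "i \<in> {1..n}" "j \<in> {1..n}"
  shows "mstar csS n M (\<rho> @ \<pi>) [] i j = (\<Sum>k=1..n. mstar csS n M \<rho> [] i k * mstar csS n M \<pi> [] k j)"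
proof -
  have "mstar csS n M (\<rho> @ \<pi>) [] i j
      = gsum csS (\<lambda>m. \<Sum>k=1..n. \<Sum>m1\<le>m. Mpow m1 \<rho> [] i k * Mpow (m - m1) \<pi> [] k j) UNIV"
    unfolding mstar_def mpow_append_source[OF assms] by (intro S.gsum_cong sum.swap)
  also have "\<dots> = (\<Sum>k=1..n. gsum csS (\<lambda>m. \<Sum>m1\<le>m. Mpow m1 \<rho> [] i k * Mpow (m - m1) \<pi> [] k j) UNIV)"
    by (simp add: S.gsum_sum_swap)
  also have "\<dots> = (\<Sum>k=1..n. mstar csS n M \<rho> [] i k * mstar csS n M \<pi> [] k j)"
  proof (intro sum.cong refl)
    fix k
    show "gsum csS (\<lambda>m. \<Sum>m1\<le>m. Mpow m1 \<rho> [] i k * Mpow (m - m1) \<pi> [] k j) UNIV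
        = mstar csS n M \<rho> [] i k * mstar csS n M \<pi> [] k j"
      using S.gsum_convolution[of "\<lambda>a b. Mpow a \<rho> [] i k * Mpow b \<pi> [] k j"]
      by (simp add: mstar_def gsum_product)
  qed
  finally show ?thesis .
qed

lemma mstar_Nil:
  assumes "i \<in> {1..n}" "j \<in> {1..n}"
  shows "mstar csS n M [] [] i j = (if i = j then 1 else 0)"
proof -
  have "mstar csS n M [] [] i j = gsum csS (\<lambda>m. Mpow m [] [] i j) {0}"
    unfolding mstar_def using assms by (intro S.gsum_mono_neutral) (auto simp: mpow_Nil_source)
  then show ?thesis by (simp add: S.gsum_singleton)
qed

lemma mstar_eq_word_mat:
  "i \<in> {1..n} \<Longrightarrow> j \<in> {1..n} \<Longrightarrow>
   mstar csS n M \<pi> [] i j = word_mat n (\<lambda>p. mstar csS n M [p] []) \<pi> i j"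
proof (induction \<pi> arbitrary: i j)
  case Nil
  then show ?case by (simp add: mstar_Nil word_mat_def idm_def)
next
  case (Cons q \<pi>)
  have "mstar csS n M ([q] @ \<pi>) [] i j = (\<Sum>k=1..n. mstar csS n M [q] [] i k * mstar csS n M \<pi> [] k j)"
    by (rule mstar_append_source[OF Cons.prems])
  then show ?case
    using Cons.IH[OF _ Cons.prems(2)] by (simp add: word_mat_def mm_def)
qed

lemma mstar_Suc: "mstar csS n M [p] [] i k = gsum csS (\<lambda>m. Mpow (Suc m) [p] [] i k) UNIV"
proof -
  have "mstar csS n M [p] [] i k = gsum csS (\<lambda>m. Mpow m [p] [] i k) (range Suc)"
    unfolding mstar_def
  proof (rule S.gsum_mono_neutral)
    fix m assume "m \<in> UNIV - range Suc"
    then have "m = 0" by (cases m) auto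
    then show "Mpow m [p] [] i k = 0" by simp
  qed simp
  then show ?thesis by (simp add: S.gsum_reindex)
qed

lemma mstar_equation:
  assumes "i \<in> {1..n}" "j \<in> {1..n}"
  shows "mstar csS n M [p] [] i j
    = gsum csS (\<lambda>\<pi>. mm n (M [p] \<pi>) (word_mat n (\<lambda>p. mstar csS n M [p] []) \<pi>) i j) UNIV"
proof -
  have "mstar csS n M [p] [] i j
      = gsum csS (\<lambda>m. gsum csS (\<lambda>\<pi>. \<Sum>k=1..n. M [p] \<pi> i k * Mpow m \<pi> [] k j) UNIV) UNIV"
    unfolding mstar_Suc mpow_Suc_left_gsum[OF assms] ..
  also have "\<dots> = gsum csS (\<lambda>\<pi>. \<Sum>k=1..n. M [p] \<pi> i k * mstar csS n M \<pi> [] k j) UNIV"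
    by (subst S.gsum_swap) (simp add: S.gsum_sum_swap gsum_distrib_left mstar_def)
  also have "\<dots> = gsum csS (\<lambda>\<pi>. mm n (M [p] \<pi>) (word_mat n (\<lambda>p. mstar csS n M [p] []) \<pi>) i j) UNIV"
    unfolding mm_def using mstar_eq_word_mat[OF _ assms(2)] by (auto intro!: S.gsum_cong sum.cong)
  finally show ?thesis .
qed

(* A path of length m from stack pi and state i: cs ! t and ks ! t are the stack and the state
   after step t + 1. *)
definition path_weight :: "'g list \<Rightarrow> nat \<Rightarrow> 'g list list \<Rightarrow> nat list \<Rightarrow> 's" where
  "path_weight \<pi> i cs ks =
     prod_list (map (\<lambda>t. M ((\<pi> # cs) ! t) (cs ! t) ((i # ks) ! t) (ks ! t)) [0..<length cs])"

definition paths :: "nat \<Rightarrow> ('g list list \<times> nat list) set" where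
  "paths m = {(cs, ks). length cs = m \<and> length ks = m \<and> set ks \<subseteq> {1..n}}"

lemma path_weight_Cons: "path_weight \<pi> i (c # cs) (k # ks) = M \<pi> c i k * path_weight c k cs ks"
  unfolding path_weight_def by (simp add: upt_conv_Cons map_Suc_upt[symmetric] comp_def del: upt_Suc)

lemma path_weight_eq_zero:
  "t < length cs \<Longrightarrow> M ((\<pi> # cs) ! t) (cs ! t) ((i # ks) ! t) (ks ! t) = 0 \<Longrightarrow> path_weight \<pi> i cs ks = 0"
  unfolding path_weight_def by (rule prod_list_eq_zero) force

lemma paths_nth_state:
  assumes "(cs, ks) \<in> paths m" "t < m"
  shows "ks ! t \<in> {1..n}"
proof -
  have "ks ! t \<in> set ks" using assms by (simp add: paths_def)
  then show ?thesis using assms(1) unfolding paths_def by blast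
qed

lemma mpow_Suc_eq_path_sum:
  assumes "i \<in> {1..n}" "j \<in> {1..n}"
  shows "Mpow (Suc m) \<pi> \<pi>' i j
    = gsum csS (\<lambda>(cs, ks). path_weight \<pi> i cs ks) {(cs, ks) \<in> paths (Suc m). last cs = \<pi>' \<and> last ks = j}"
  using assms(1)
proof (induction m arbitrary: \<pi> i)
  case 0
  have "{(cs, ks) \<in> paths (Suc 0). last cs = \<pi>' \<and> last ks = j} = {([\<pi>'], [j])}"
    using assms(2) by (auto simp: paths_def length_Suc_conv)
  then show ?case
    using blockmul_one_left[OF 0] by (simp add: S.gsum_singleton path_weight_def)
next
  case (Suc m)
  let ?P = "\<lambda>m. {(cs, ks) \<in> paths m. last cs = \<pi>' \<and> last ks = j}"
  let ?h = "\<lambda>(c, k, cs, ks). (c # cs, k # ks)"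
  have "Mpow (Suc (Suc m)) \<pi> \<pi>' i j = gsum csS (\<lambda>c. \<Sum>k=1..n. M \<pi> c i k * Mpow (Suc m) c \<pi>' k j) UNIV"
    by (rule mpow_Suc_left_gsum[OF Suc.prems assms(2)])
  also have "\<dots> = gsum csS (\<lambda>c. gsum csS (\<lambda>k. gsum csS (\<lambda>(cs, ks). M \<pi> c i k * path_weight c k cs ks) (?P (Suc m))) {1..n}) UNIV"
  proof (rule S.gsum_cong)
    fix c
    show "(\<Sum>k=1..n. M \<pi> c i k * Mpow (Suc m) c \<pi>' k j)
        = gsum csS (\<lambda>k. gsum csS (\<lambda>(cs, ks). M \<pi> c i k * path_weight c k cs ks) (?P (Suc m))) {1..n}"
      unfolding S.gsum_eq_sum[OF finite_atLeastAtMost]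
      by (intro sum.cong refl) (simp add: Suc.IH gsum_distrib_left split_def del: mpow.simps(2))
  qed
  also have "\<dots> = gsum csS (\<lambda>(c, k, cs, ks). path_weight \<pi> i (c # cs) (k # ks)) (UNIV \<times> {1..n} \<times> ?P (Suc m))"
    by (simp add: S.gsum_Sigma path_weight_Cons split_def)
  also have "\<dots> = gsum csS (\<lambda>(cs, ks). path_weight \<pi> i cs ks) (?h ` (UNIV \<times> {1..n} \<times> ?P (Suc m)))"
    by (subst S.gsum_reindex) (auto simp: inj_on_def intro!: S.gsum_cong)
  also have "?h ` (UNIV \<times> {1..n} \<times> ?P (Suc m)) = ?P (Suc (Suc m))"
    by (auto simp: paths_def length_Suc_conv image_iff)
  finally show ?case .
qed

lemma paths_Cons_state:
  assumes "(cs, ks) \<in> paths m" "i \<in> {1..n}" "t \<le> m"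
  shows "(i # ks) ! t \<in> {1..n}"
  using assms paths_nth_state[OF assms(1)] by (cases t) auto

lemma path_weight_through_Nil:
  assumes "(cs, ks) \<in> paths m" "[] \<in> set (butlast cs)"
  shows "path_weight \<sigma> i cs ks = 0"
proof -
  obtain t where "t < length cs - 1" "cs ! t = []"
    using assms(2) by (auto simp: in_set_conv_nth nth_butlast)
  then have t: "Suc t < m" "cs ! t = []" using assms(1) by (auto simp: paths_def)
  show ?thesis
  proof (rule path_weight_eq_zero)
    show "Suc t < length cs" using assms(1) t by (simp add: paths_def)
    show "M ((\<sigma> # cs) ! Suc t) (cs ! Suc t) ((i # ks) ! Suc t) (ks ! Suc t) = 0"
      using t M_Nil_source paths_nth_state[OF assms(1)] by simp
  qed
qed

lemma path_weight_append_stacks: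
  assumes "(cs, ks) \<in> paths m" "i \<in> {1..n}" "\<sigma> \<noteq> []" "[] \<notin> set (butlast cs)"
  shows "path_weight (\<sigma> @ \<rho>) i (map (\<lambda>c. c @ \<rho>) cs) ks = path_weight \<sigma> i cs ks"
proof -
  have "M (((\<sigma> @ \<rho>) # map (\<lambda>c. c @ \<rho>) cs) ! t) (cs ! t @ \<rho>) ((i # ks) ! t) (ks ! t)
      = M ((\<sigma> # cs) ! t) (cs ! t) ((i # ks) ! t) (ks ! t)" if "t < m" for t
  proof (cases t)
    case 0
    then show ?thesis using assms that paths_nth_state by (simp add: M_append_append)
  next
    case (Suc t')
    have "cs ! t' \<in> set (butlast cs)"
      using assms(1) that Suc by (auto simp: paths_def intro: nth_in_set_butlast)
    then have "cs ! t' \<noteq> []" using assms(4) by auto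
    moreover have "ks ! t' \<in> {1..n}" "ks ! t \<in> {1..n}" "length cs = m"
      using assms(1) that Suc paths_nth_state by (auto simp: paths_def)
    ultimately show ?thesis using Suc that by (simp add: M_append_append)
  qed
  then show ?thesis
    using assms(1) unfolding path_weight_def paths_def by (auto intro: map_cong arg_cong[where f = prod_list])
qed

lemma path_weight_leaves_suffix:
  assumes "(cs, ks) \<in> paths m" "i \<in> {1..n}" "proper_suffix \<rho> \<sigma>" "\<rho> \<notin> set (butlast cs)"
    and "c \<in> set (butlast cs)" "\<not> proper_suffix \<rho> c"
  shows "path_weight \<sigma> i cs ks = 0"
proof -
  let ?s = "\<lambda>t. (\<sigma> # cs) ! t"
  obtain T where T: "T < length (butlast cs)" "cs ! T = c"
    using assms(5) by (auto simp: in_set_conv_nth nth_butlast)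
  have "\<forall>t \<le> Suc T. ?s t \<noteq> \<rho>"
  proof (intro allI impI)
    fix t assume "t \<le> Suc T"
    then show "?s t \<noteq> \<rho>"
      using assms(3,4) T(1) by (cases t) (auto simp: proper_suffix_def in_set_conv_nth nth_butlast)
  qed
  then obtain t where t: "0 < t" "t \<le> Suc T" "proper_suffix \<rho> (?s (t - 1))" "\<not> proper_suffix \<rho> (?s t)" "?s t \<noteq> \<rho>"
    using exists_first_exit[of \<rho> ?s "Suc T"] assms(3,6) T by auto
  show ?thesis
  proof (rule path_weight_eq_zero)
    show "t - 1 < length cs" using t T by simp
    show "M ((\<sigma> # cs) ! (t - 1)) (cs ! (t - 1)) ((i # ks) ! (t - 1)) (ks ! (t - 1)) = 0"
      using t T assms(1,2) by (intro M_leaves_suffix paths_Cons_state paths_nth_state) (auto simp: paths_def)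
  qed
qed

lemma path_sum_lift:
  assumes "i \<in> {1..n}"
  shows "gsum csS (\<lambda>(cs, ks). path_weight (p # \<rho>) i cs ks)
           {(cs, ks) \<in> paths (Suc m). last cs = \<rho> \<and> \<rho> \<notin> set (butlast cs) \<and> last ks = k}
       = gsum csS (\<lambda>(cs, ks). path_weight [p] i cs ks) {(cs, ks) \<in> paths (Suc m). last cs = [] \<and> last ks = k}"
    (is "gsum csS ?w ?L = gsum csS ?v ?R")
proof -
  let ?G = "{(cs, ks) \<in> paths (Suc m). last cs = [] \<and> [] \<notin> set (butlast cs) \<and> last ks = k}"
  let ?h = "\<lambda>(cs, ks). (map (\<lambda>c. c @ \<rho>) cs, ks)"
  have img: "?h ` ?G \<subseteq> ?L"
    by (auto simp: paths_def last_map map_butlast[symmetric] simp flip: length_greater_0_conv)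
  have "gsum csS ?w ?L = gsum csS ?w (?h ` ?G)"
  proof (rule S.gsum_mono_neutral[OF img])
    fix x assume x: "x \<in> ?L - ?h ` ?G"
    then obtain cs ks where cs: "x = (cs, ks)" "(cs, ks) \<in> paths (Suc m)" "last cs = \<rho>"
      "\<rho> \<notin> set (butlast cs)" "last ks = k" by blast
    have "\<exists>c \<in> set (butlast cs). \<not> proper_suffix \<rho> c"
    proof (rule ccontr)
      assume "\<not> ?thesis"
      moreover have "cs \<noteq> []" using cs(2) by (auto simp: paths_def)
      ultimately obtain cs' where "cs = map (\<lambda>c. c @ \<rho>) cs'" "[] \<notin> set (butlast cs')" "last cs' = []"
        using proper_suffixes_eq_map_append cs(3) by blast
      then have "x \<in> ?h ` ?G" using cs by (auto simp: paths_def image_iff)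
      then show False using x by blast
    qed
    then show "?w x = 0"
      using path_weight_leaves_suffix[of cs ks _ i \<rho> "p # \<rho>"] assms cs
      by (auto simp: proper_suffix_def)
  qed
  also have "\<dots> = gsum csS ?v ?G"
    using assms path_weight_append_stacks[of _ _ "Suc m" i "[p]" \<rho>]
    by (subst S.gsum_reindex) (auto simp: inj_on_def intro!: S.gsum_cong)
  also have "\<dots> = gsum csS ?v ?R"
    using path_weight_through_Nil by (intro S.gsum_mono_neutral[symmetric]) auto
  finally show ?thesis .
qed

abbreviation Momega :: "nat \<Rightarrow> 'g list \<Rightarrow> nat \<Rightarrow> 'v" where
  "Momega l \<equiv> momega csV ip n l M"

definition omega_weights :: "'g list \<Rightarrow> nat \<Rightarrow> (nat \<Rightarrow> 'g list) \<Rightarrow> (nat \<Rightarrow> nat) \<Rightarrow> nat \<Rightarrow> 's" where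
  "omega_weights \<pi> i ps js t = M ((\<pi> ## ps) t) (ps t) ((i ## js) t) (js t)"

lemma momega_eq_gsum:
  "Momega l \<pi> i = gsum csV (\<lambda>(ps, js). ip (omega_weights \<pi> i ps js)) (UNIV \<times> Pl n l)"
proof -
  have "M (if t = 0 then \<pi> else ps (t - 1)) (ps t) (if t = 0 then i else js (t - 1)) (js t)
      = omega_weights \<pi> i ps js t" for ps js t
    by (cases t) (simp_all add: omega_weights_def)
  then show ?thesis by (simp add: momega_def V.gsum_Sigma)
qed

lemma ip_omega_weights_conc:
  assumes "length cs = m" "length ks = m"
  shows "ip (omega_weights \<pi> i (cs \<frown> ps) (ks \<frown> js))
       = sm (path_weight \<pi> i cs ks) (ip (omega_weights (last (\<pi> # cs)) (last (i # ks)) ps js))"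
proof -
  have "prefix m (omega_weights \<pi> i (cs \<frown> ps) (ks \<frown> js))
      = map (\<lambda>t. M ((\<pi> # cs) ! t) (cs ! t) ((i # ks) ! t) (ks ! t)) [0..<m]"
    using assms by (simp add: subsequence_def omega_weights_def flip: build_cons)
  moreover have "suffix m (omega_weights \<pi> i (cs \<frown> ps) (ks \<frown> js))
      = omega_weights (last (\<pi> # cs)) (last (i # ks)) ps js"
    using assms by (simp add: fun_eq_iff omega_weights_def suffix_def build_conc_shift)
  ultimately show ?thesis
    using ip_prefix_suffix[of "omega_weights \<pi> i (cs \<frown> ps) (ks \<frown> js)" m] assms
    by (simp add: path_weight_def)
qed

lemma momega_split:
  "gsum csV (\<lambda>(ps, js). ip (omega_weights \<pi> i ps js)) {(ps, js) \<in> UNIV \<times> Pl n l. (prefix m ps, prefix m js) \<in> Q}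
   = gsum csV (\<lambda>(cs, ks). sm (path_weight \<pi> i cs ks) (Momega l (last (\<pi> # cs)) (last (i # ks)))) (paths m \<inter> Q)"
proof -
  let ?A = "{(ps, js) \<in> UNIV \<times> Pl n l. (prefix m ps, prefix m js) \<in> Q}"
  let ?B = "(paths m \<inter> Q) \<times> (UNIV \<times> Pl n l)"
  let ?conc = "\<lambda>((cs, ks), (ps, js)). (cs \<frown> ps, ks \<frown> js)"
  define w where "w cs ks ps js = sm (path_weight \<pi> i cs ks)
    (ip (omega_weights (last (\<pi> # cs)) (last (i # ks)) ps js))" for cs ks ps js
  have "bij_betw ?conc ?B ?A"
  proof (rule bij_betw_byWitness[where f' = "\<lambda>(ps, js). ((prefix m ps, prefix m js), (suffix m ps, suffix m js))"])
    show "?conc ` ?B \<subseteq> ?A" by (auto simp: paths_def conc_in_Pl_iff)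
    show "(\<lambda>(ps, js). ((prefix m ps, prefix m js), (suffix m ps, suffix m js))) ` ?A \<subseteq> ?B"
    proof
      fix y assume "y \<in> (\<lambda>(ps, js). ((prefix m ps, prefix m js), (suffix m ps, suffix m js))) ` ?A"
      then obtain ps js where y: "y = ((prefix m ps, prefix m js), (suffix m ps, suffix m js))"
        and js: "js \<in> Pl n l" and Q: "(prefix m ps, prefix m js) \<in> Q" by auto
      have "set (prefix m js) \<subseteq> {1..n}" using js by (auto simp: Pl_def subsequence_def)
      then show "y \<in> ?B" using y js Q by (simp add: paths_def suffix_in_Pl)
    qed
  qed (auto simp: paths_def simp flip: prefix_suffix)
  then have "gsum csV (\<lambda>(ps, js). ip (omega_weights \<pi> i ps js)) ?A
      = gsum csV (\<lambda>((cs, ks), (ps, js)). w cs ks ps js) ?B"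
    by (subst V.gsum_reindex_bij_betw) (auto simp: paths_def ip_omega_weights_conc w_def intro!: V.gsum_cong)
  also have "\<dots> = gsum csV (\<lambda>(cs, ks). gsum csV (\<lambda>(ps, js). w cs ks ps js) (UNIV \<times> Pl n l)) (paths m \<inter> Q)"
    unfolding V.gsum_Sigma by (intro V.gsum_cong) (auto split: prod.split)
  finally show ?thesis
    by (auto simp: w_def momega_eq_gsum sm_gsum split_def intro!: V.gsum_cong)
qed

lemma momega_step: "Momega l \<pi> i = gsum csV (\<lambda>c. \<Sum>k=1..n. sm (M \<pi> c i k) (Momega l c k)) UNIV"
proof -
  have "Momega l \<pi> i = gsum csV (\<lambda>(ps, js). ip (omega_weights \<pi> i ps js))
      {(ps, js) \<in> UNIV \<times> Pl n l. (prefix 1 ps, prefix 1 js) \<in> UNIV}"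
    unfolding momega_eq_gsum by (rule V.gsum_mono_neutral) auto
  also have "\<dots> = gsum csV (\<lambda>(cs, ks). sm (path_weight \<pi> i cs ks) (Momega l (last (\<pi> # cs)) (last (i # ks))))
      (paths 1 \<inter> UNIV)"
    by (rule momega_split)
  also have "paths 1 \<inter> UNIV = (\<lambda>(c, k). ([c], [k])) ` (UNIV \<times> {1..n})"
    by (auto simp: paths_def length_Suc_conv image_iff)
  also have "gsum csV (\<lambda>(cs, ks). sm (path_weight \<pi> i cs ks) (Momega l (last (\<pi> # cs)) (last (i # ks)))) \<dots>
      = gsum csV (\<lambda>(c, k). sm (M \<pi> c i k) (Momega l c k)) (UNIV \<times> {1..n})"
    by (subst V.gsum_reindex) (auto simp: inj_on_def path_weight_def intro!: V.gsum_cong)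
  finally show ?thesis
    by (simp add: V.gsum_Sigma V.gsum_eq_sum)
qed

lemma momega_Nil: "k \<in> {1..n} \<Longrightarrow> Momega l [] k = 0"
  unfolding momega_eq_gsum
  by (intro V.gsum_neutral) (auto simp: Pl_def omega_weights_def M_Nil_source intro!: ip_eq_zero[of _ 0])

lemma ip_omega_weights_through_Nil:
  assumes "js \<in> Pl n l" "ps t = []"
  shows "ip (omega_weights \<sigma> i ps js) = 0"
  using assms by (intro ip_eq_zero[of _ "Suc t"]) (auto simp: omega_weights_def Pl_def M_Nil_source)

lemma omega_weights_append_stacks:
  assumes "js \<in> Pl n l" "i \<in> {1..n}" "\<sigma> \<noteq> []" "\<forall>t. ps t \<noteq> []"
  shows "omega_weights (\<sigma> @ \<rho>) i (\<lambda>t. ps t @ \<rho>) js = omega_weights \<sigma> i ps js"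
proof
  fix t
  show "omega_weights (\<sigma> @ \<rho>) i (\<lambda>t. ps t @ \<rho>) js t = omega_weights \<sigma> i ps js t"
    using assms by (cases t) (auto simp: omega_weights_def Pl_def M_append_append)
qed

lemma ip_omega_weights_leaves_suffix:
  assumes "js \<in> Pl n l" "i \<in> {1..n}" "proper_suffix \<rho> \<sigma>" "\<forall>t. ps t \<noteq> \<rho>" "\<not> proper_suffix \<rho> (ps T)"
  shows "ip (omega_weights \<sigma> i ps js) = 0"
proof -
  have "\<forall>t \<le> Suc T. (\<sigma> ## ps) t \<noteq> \<rho>"
  proof (intro allI impI)
    fix t show "(\<sigma> ## ps) t \<noteq> \<rho>"
      using assms(3,4) by (cases t) (auto simp: proper_suffix_def)
  qed
  then obtain t where t: "0 < t" "proper_suffix \<rho> ((\<sigma> ## ps) (t - 1))"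
      "\<not> proper_suffix \<rho> ((\<sigma> ## ps) t)" "(\<sigma> ## ps) t \<noteq> \<rho>"
    using exists_first_exit[of \<rho> "\<sigma> ## ps" "Suc T"] assms(3,5) by auto
  then obtain t' where "t = Suc t'" by (cases t) auto
  moreover have "(i ## js) t' \<in> {1..n}" "js t' \<in> {1..n}"
    using build_in_Pl_range[OF assms(2,1)] assms(1) by (auto simp: Pl_def)
  ultimately have "omega_weights \<sigma> i ps js t' = 0"
    using t by (simp add: omega_weights_def M_leaves_suffix)
  then show ?thesis by (rule ip_eq_zero)
qed

lemma momega_avoiding:
  assumes "i \<in> {1..n}"
  shows "gsum csV (\<lambda>(ps, js). ip (omega_weights (p # \<rho>) i ps js)) {(ps, js) \<in> UNIV \<times> Pl n l. \<forall>t. ps t \<noteq> \<rho>}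
       = Momega l [p] i"
proof -
  let ?w = "\<lambda>\<sigma> (ps, js). ip (omega_weights \<sigma> i ps js)"
  let ?A = "{(ps, js) \<in> UNIV \<times> Pl n l. \<forall>t. ps t \<noteq> \<rho>}"
  let ?G = "{(ps, js) \<in> UNIV \<times> Pl n l. \<forall>t. ps t \<noteq> []}"
  let ?h = "\<lambda>(ps, js). ((\<lambda>t::nat. ps t @ \<rho>), js)"
  have "gsum csV (?w (p # \<rho>)) ?A = gsum csV (?w (p # \<rho>)) (?h ` ?G)"
  proof (rule V.gsum_mono_neutral)
    show "?h ` ?G \<subseteq> ?A" by auto
  next
    fix x assume x: "x \<in> ?A - ?h ` ?G"
    then obtain ps js where ps: "x = (ps, js)" "js \<in> Pl n l" "\<forall>t. ps t \<noteq> \<rho>" by blast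
    have "\<exists>T. \<not> proper_suffix \<rho> (ps T)"
    proof (rule ccontr)
      assume "\<nexists>T. \<not> proper_suffix \<rho> (ps T)"
      then have "\<forall>t. \<exists>\<tau>. \<tau> \<noteq> [] \<and> ps t = \<tau> @ \<rho>" by (simp add: proper_suffix_def)
      then obtain ps' where "\<forall>t. ps' t \<noteq> [] \<and> ps t = ps' t @ \<rho>" by metis
      then have "x = ?h (ps', js)" "(ps', js) \<in> ?G" using ps by (auto simp: fun_eq_iff)
      then have "x \<in> ?h ` ?G" by blast
      then show False using x by blast
    qed
    moreover have "proper_suffix \<rho> (p # \<rho>)"
      unfolding proper_suffix_def by (intro exI[of _ "[p]"]) simp
    ultimately show "?w (p # \<rho>) x = 0"
      using ip_omega_weights_leaves_suffix[OF ps(2) assms] ps by auto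
  qed
  also have "\<dots> = gsum csV (?w [p]) ?G"
  proof -
    have "inj_on ?h ?G" by (auto simp: inj_on_def fun_eq_iff)
    then show ?thesis
      using assms omega_weights_append_stacks[where \<sigma> = "[p]" and \<rho> = \<rho>]
      by (subst V.gsum_reindex) (auto intro!: V.gsum_cong)
  qed
  also have "\<dots> = Momega l [p] i"
    unfolding momega_eq_gsum
    by (rule V.gsum_mono_neutral[symmetric]) (auto intro: ip_omega_weights_through_Nil)
  finally show ?thesis .
qed

lemma momega_first_hit:
  assumes "i \<in> {1..n}"
  shows "gsum csV (\<lambda>(ps, js). ip (omega_weights (p # \<rho>) i ps js))
           {(ps, js) \<in> UNIV \<times> Pl n l. ps T = \<rho> \<and> (\<forall>t<T. ps t \<noteq> \<rho>)}
       = (\<Sum>k=1..n. sm (Mpow (Suc T) [p] [] i k) (Momega l \<rho> k))"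
proof -
  let ?Q = "{(cs, ks). last cs = \<rho> \<and> \<rho> \<notin> set (butlast cs)}"
  have first_visit: "{(ps, js) \<in> UNIV \<times> Pl n l. ps T = \<rho> \<and> (\<forall>t<T. ps t \<noteq> \<rho>)}
      = {(ps, js) \<in> UNIV \<times> Pl n l. (prefix (Suc T) ps, prefix (Suc T) js) \<in> ?Q}"
    by (rule set_eqI) (simp only: first_visit_prefix_iff mem_Collect_eq case_prod_unfold fst_conv snd_conv)
  let ?B = "\<lambda>k. {(cs, ks) \<in> paths (Suc T). last cs = \<rho> \<and> \<rho> \<notin> set (butlast cs) \<and> last ks = k}"
  let ?w = "\<lambda>(cs, ks). sm (path_weight (p # \<rho>) i cs ks) (Momega l \<rho> (last ks))"
  have "paths (Suc T) \<inter> ?Q = (\<Union>k\<in>{1..n}. ?B k)"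
  proof
    show "paths (Suc T) \<inter> ?Q \<subseteq> (\<Union>k\<in>{1..n}. ?B k)"
    proof
      fix x assume x: "x \<in> paths (Suc T) \<inter> ?Q"
      then obtain cs ks where "x = (cs, ks)" "length ks = Suc T" "set ks \<subseteq> {1..n}"
        by (auto simp: paths_def)
      moreover have "last ks \<in> set ks" using calculation(2) by (intro last_in_set) auto
      ultimately show "x \<in> (\<Union>k\<in>{1..n}. ?B k)" using x by auto
    qed
  qed auto
  then have "gsum csV (\<lambda>(ps, js). ip (omega_weights (p # \<rho>) i ps js))
      {(ps, js) \<in> UNIV \<times> Pl n l. ps T = \<rho> \<and> (\<forall>t<T. ps t \<noteq> \<rho>)}
      = gsum csV ?w (\<Union>k\<in>{1..n}. ?B k)"
    unfolding first_visit momega_split by (auto simp: paths_def intro!: V.gsum_cong)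
  also have "\<dots> = (\<Sum>k=1..n. gsum csV ?w (?B k))"
    by (subst V.gsum_UN_disjoint) (auto simp: V.gsum_eq_sum)
  also have "\<dots> = (\<Sum>k=1..n. sm (gsum csS (\<lambda>(cs, ks). path_weight (p # \<rho>) i cs ks) (?B k)) (Momega l \<rho> k))"
    by (intro sum.cong refl) (auto simp: gsum_sm split_def intro!: V.gsum_cong)
  also have "\<dots> = (\<Sum>k=1..n. sm (Mpow (Suc T) [p] [] i k) (Momega l \<rho> k))"
  proof (intro sum.cong refl)
    fix k assume "k \<in> {1..n}"
    then show "sm (gsum csS (\<lambda>(cs, ks). path_weight (p # \<rho>) i cs ks) (?B k)) (Momega l \<rho> k)
        = sm (Mpow (Suc T) [p] [] i k) (Momega l \<rho> k)"
      by (simp only: path_sum_lift[OF assms] mpow_Suc_eq_path_sum[OF assms])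
  qed
  finally show ?thesis .
qed

lemma momega_Cons:
  assumes "i \<in> {1..n}"
  shows "Momega l (p # \<rho>) i = Momega l [p] i + (\<Sum>k=1..n. sm (mstar csS n M [p] [] i k) (Momega l \<rho> k))"
proof -
  let ?w = "\<lambda>(ps, js). ip (omega_weights (p # \<rho>) i ps js)"
  let ?A = "{(ps, js) \<in> UNIV \<times> Pl n l. \<forall>t. ps t \<noteq> \<rho>}"
  let ?H = "\<lambda>T::nat. {(ps, js) \<in> UNIV \<times> Pl n l. ps T = \<rho> \<and> (\<forall>t<T. ps t \<noteq> \<rho>)}"
  have cover: "UNIV \<times> Pl n l = ?A \<union> (\<Union>T. ?H T)"
  proof (intro equalityI subsetI)
    fix x :: "(nat \<Rightarrow> 'g list) \<times> (nat \<Rightarrow> nat)"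
    assume x: "x \<in> UNIV \<times> Pl n l"
    obtain ps js where x_eq: "x = (ps, js)" by force
    show "x \<in> ?A \<union> (\<Union>T. ?H T)"
    proof (cases "\<exists>t. ps t = \<rho>")
      case True
      then obtain T where "ps T = \<rho>" "\<forall>t<T. ps t \<noteq> \<rho>"
        using exists_least_iff[of "\<lambda>t. ps t = \<rho>"] by blast
      then show ?thesis using x x_eq by blast
    qed (use x x_eq in auto)
  qed auto
  have disjoint: "?H T \<inter> ?H T' = {}" if "T \<noteq> T'" for T T'
  proof -
    have False if "ps T = \<rho>" "\<forall>t<T. ps t \<noteq> \<rho>" "ps T' = \<rho>" "\<forall>t<T'. ps t \<noteq> \<rho>" for ps
      using that \<open>T \<noteq> T'\<close> by (cases T T' rule: linorder_cases) auto
    then show ?thesis by blast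
  qed
  have "Momega l (p # \<rho>) i = gsum csV ?w (?A \<union> (\<Union>T. ?H T))"
    unfolding momega_eq_gsum by (rule arg_cong[OF cover])
  also have "\<dots> = gsum csV ?w ?A + gsum csV (\<lambda>T. gsum csV ?w (?H T)) UNIV"
    using disjoint by (subst V.gsum_Un_disjoint) (auto simp: V.gsum_UN_disjoint)
  also have "\<dots> = Momega l [p] i + gsum csV (\<lambda>T. \<Sum>k=1..n. sm (Mpow (Suc T) [p] [] i k) (Momega l \<rho> k)) UNIV"
    by (simp only: momega_avoiding[OF assms] momega_first_hit[OF assms])
  also have "\<dots> = Momega l [p] i + (\<Sum>k=1..n. sm (mstar csS n M [p] [] i k) (Momega l \<rho> k))"
    by (simp add: V.gsum_sum_swap mstar_Suc gsum_sm del: mpow.simps(2))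
  finally show ?thesis .
qed

lemma mv_mm: "mv sm n (mm n A B) v k = (\<Sum>k'=1..n. sm (A k k') (mv sm n B v k'))"
proof -
  have "mv sm n (mm n A B) v k = (\<Sum>k''=1..n. \<Sum>k'=1..n. sm (A k k') (sm (B k' k'') (v k'')))"
    by (simp add: mv_def mm_def sum_sm sm_mult)
  also have "\<dots> = (\<Sum>k'=1..n. sm (A k k') (mv sm n B v k'))"
    by (subst sum.swap) (simp add: mv_def sm_sum)
  finally show ?thesis .
qed

lemma mv_idm: "k \<in> {1..n} \<Longrightarrow> mv sm n idm v k = v k"
  unfolding mv_def idm_def by (simp add: if_distrib[of "\<lambda>s. sm s _"] cong: if_cong)

lemma momega_eq_word_sum:
  "k \<in> {1..n} \<Longrightarrow> Momega l \<pi> k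
     = (\<Sum>j<length \<pi>. mv sm n (word_mat n (\<lambda>p. mstar csS n M [p] []) (take j \<pi>)) (Momega l [\<pi> ! j]) k)"
proof (induction \<pi> arbitrary: k)
  case Nil
  then show ?case by (simp add: momega_Nil)
next
  case (Cons q \<pi>)
  let ?x = "\<lambda>p. mstar csS n M [p] []"
  have "Momega l (q # \<pi>) k = Momega l [q] k + (\<Sum>k'=1..n. sm (?x q k k') (Momega l \<pi> k'))"
    by (rule momega_Cons[OF Cons.prems])
  also have "\<dots> = Momega l [q] k
      + (\<Sum>k'=1..n. sm (?x q k k') (\<Sum>j<length \<pi>. mv sm n (word_mat n ?x (take j \<pi>)) (Momega l [\<pi> ! j]) k'))"
    by (intro arg_cong[where f = "(+) _"] sum.cong refl arg_cong[where f = "sm _"]) (erule Cons.IH)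
  also have "\<dots> = Momega l [q] k
      + (\<Sum>j<length \<pi>. \<Sum>k'=1..n. sm (?x q k k') (mv sm n (word_mat n ?x (take j \<pi>)) (Momega l [\<pi> ! j]) k'))"
    by (simp only: sm_sum) (simp only: sum.swap[of _ "{1..n}" "{..<length \<pi>}"])
  also have "\<dots> = (\<Sum>j<length (q # \<pi>). mv sm n (word_mat n ?x (take j (q # \<pi>))) (Momega l [(q # \<pi>) ! j]) k)"
    by (simp add: sum.lessThan_Suc_shift mv_idm[OF Cons.prems] word_mat_def mv_mm del: sum.lessThan_Suc)
  finally show ?case .
qed

lemma momega_equation:
  assumes "i \<in> {1..n}"
  shows "Momega l [p] i = gsum csV (\<lambda>\<pi>. mv sm n (M [p] \<pi>)
          (\<lambda>i'. \<Sum>j<length \<pi>. mv sm n (word_mat n (\<lambda>p. mstar csS n M [p] []) (take j \<pi>)) (Momega l [\<pi> ! j]) i') i)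
          {\<pi>. \<pi> \<noteq> []}"
proof -
  have "Momega l [p] i = gsum csV (\<lambda>\<pi>. \<Sum>k=1..n. sm (M [p] \<pi> i k) (Momega l \<pi> k)) {\<pi>. \<pi> \<noteq> []}"
    unfolding momega_step[of l "[p]"] by (rule V.gsum_mono_neutral) (auto simp: momega_Nil)
  also have "\<dots> = gsum csV (\<lambda>\<pi>. mv sm n (M [p] \<pi>)
          (\<lambda>i'. \<Sum>j<length \<pi>. mv sm n (word_mat n (\<lambda>p. mstar csS n M [p] []) (take j \<pi>)) (Momega l [\<pi> ! j]) i') i)
          {\<pi>. \<pi> \<noteq> []}"
    unfolding mv_def[of sm n "M [p] _"]
    by (intro V.gsum_cong sum.cong refl arg_cong[where f = "sm _"]) (erule momega_eq_word_sum)
  finally show ?thesis .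
qed

end

theorem theorem11:
  fixes csS :: "(tag \<Rightarrow> 's::semiring_1) \<Rightarrow> tag set \<Rightarrow> 's"
    and csV :: "(tag \<Rightarrow> 'v::comm_monoid_add) \<Rightarrow> tag set \<Rightarrow> 'v"
    and sm :: "'s \<Rightarrow> 'v \<Rightarrow> 'v"
    and ip :: "(nat \<Rightarrow> 's) \<Rightarrow> 'v"
    and S' :: "'s set"
    and n l :: nat
    and I P :: "nat \<Rightarrow> 's"
    and M :: "'g::finite list \<Rightarrow> 'g list \<Rightarrow> nat \<Rightarrow> nat \<Rightarrow> 's"
    and p0 :: 'g
  assumes "complete_ss_pair csS csV sm ip"
    and "0 \<in> S'" and "1 \<in> S'"
    and "omega_pda S' n I M P l"
  defines "x \<equiv> \<lambda>p. mstar csS n M [p] []"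
    and "z \<equiv> \<lambda>p. momega csV ip n l M [p]"
  shows "(\<forall>p. \<forall>i\<in>{1..n}. \<forall>j\<in>{1..n}.
            x p i j = gsum csS (\<lambda>\<pi>. mm n (M [p] \<pi>) (word_mat n x \<pi>) i j) UNIV)
       \<and> (\<forall>p. \<forall>i\<in>{1..n}.
            z p i = gsum csV (\<lambda>\<pi>. mv sm n (M [p] \<pi>)
                      (\<lambda>i'. \<Sum>j<length \<pi>. mv sm n (word_mat n x (take j \<pi>)) (z (\<pi> ! j)) i') i)
                    {\<pi>. \<pi> \<noteq> []})
       \<and> behavior csS csV sm ip n I M P p0 l
           = ((\<Sum>i = 1..n. \<Sum>j = 1..n. I i * x p0 i j * P j), (\<Sum>i = 1..n. sm (I i) (z p0 i)))"
proof -
  interpret pushdown csS csV sm ip n M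
    using assms(1,4) by unfold_locales (simp_all add: omega_pda_def)
  show ?thesis
    unfolding x_def z_def behavior_def using mstar_equation momega_equation by blast
qed

end
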